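(* Let $M$ and $N$ be positive integers. For an integer $N_{\rm in}$, put $N_{\rm ou}=N-N_{\rm in}$. Call $N_{\rm in}$ feasible if it forms a (genuine) two-level nested array, i.e. $N_{\rm in}\ge 1$ and $N_{\rm ou}\ge 2$ (equivalently $N_{\rm in}\in\{1,2,\dots,N-2\}$), and it satisfies the dimension constraint $$N_{\rm ou}(N_{\rm in}+1)d-d\le (M-1)d,$$ where $d>0$. Define $$N_{\rm in}^l=\left\lfloor \frac{(N-1)-\sqrt{(N+1)^2-4M}}{2}\right\rfloor,\qquad N_{\rm in}^u=\left\lceil \frac{(N-1)+\sqrt{(N+1)^2-4M}}{2}\right\rceil .$$ Then the set $\mathcal S_{\rm NA}$ of feasible $N_{\rm in}$ is: (i) $\mathcal S_{\rm NA}=\{1,2,\dots,N-2\}$ if $\frac{(N+1)^2}{4}\le M$; (ii) $\mathcal S_{\rm NA}=\{1,\dots,N_{\rm in}^l\}\cup\{N_{\rm in}^u,\dots,N-2\}$ if $\frac{(N+1)^2}{4}> M$ and $N_{\rm in}^l\ge 1$.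
   Context: Setting: a uniform linear array of $M$ antenna pixels with adjacent spacing $d$ (physical dimension $(M-1)d$), from which $N$ pixels are activated to form a two-level nested array: an inner compact array of $N_{\rm in}$ pixels with spacing $d$, followed by an outer uniform array of $N_{\rm ou}=N-N_{\rm in}$ pixels with spacing $(N_{\rm in}+1)d$, the last inner pixel and first outer pixel being separated by $d$. Its physical dimension is $N_{\rm ou}(N_{\rm in}+1)d-d$, which must not exceed that of the original array. The cases $N_{\rm in}=0$ or $N_{\rm ou}\in\{0,1\}$ are excluded since the array then reduces to a compact array. *)

theory Defs
  imports Complex_Main
begin

definition feasible_NA :: "int \<Rightarrow> int \<Rightarrow> real \<Rightarrow> int \<Rightarrow> bool" where
  "feasible_NA M N d Nin \<longleftrightarrow>
     Nin \<ge> 1 \<and> N - Nin \<ge> 2 \<and>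
     real_of_int (N - Nin) * real_of_int (Nin + 1) * d - d \<le> real_of_int (M - 1) * d"

definition S_NA :: "int \<Rightarrow> int \<Rightarrow> real \<Rightarrow> int set" where
  "S_NA M N d = {Nin. feasible_NA M N d Nin}"

definition Nin_l :: "int \<Rightarrow> int \<Rightarrow> int" where
  "Nin_l M N = \<lfloor>(real_of_int (N - 1) - sqrt (real_of_int ((N + 1)^2 - 4 * M))) / 2\<rfloor>"

definition Nin_u :: "int \<Rightarrow> int \<Rightarrow> int" where
  "Nin_u M N = \<lceil>(real_of_int (N - 1) + sqrt (real_of_int ((N + 1)^2 - 4 * M))) / 2\<rceil>"

end

theory Submission
  imports Defs
begin

text \<open>For d > 0 the dimension constraint is the integer inequality (N - Nin)(Nin + 1) \<le> M.
  Since 4 (N - x)(x + 1) = (N + 1)^2 - (2x - N + 1)^2, it says that the integer x lies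
  at distance at least sqrt((N + 1)^2 - 4M)/2 from (N - 1)/2, i.e. x \<le> Nin_l or x \<ge> Nin_u.
  When (N + 1)^2 \<le> 4M this holds for every x; otherwise both Nin_l \<le> (N - 1)/2 \<le> Nin_u,
  so the two rays cut the interval {1..N-2} into the two stated pieces.\<close>

lemma feasible_NA_iff:
  fixes M N x :: int and d :: real
  assumes "d > 0"
  shows "feasible_NA M N d x \<longleftrightarrow> 1 \<le> x \<and> x \<le> N - 2 \<and> (N - x) * (x + 1) \<le> M"
proof -
  have "real_of_int (N - x) * real_of_int (x + 1) * d - d \<le> real_of_int (M - 1) * d
        \<longleftrightarrow> real_of_int ((N - x) * (x + 1)) * d \<le> real_of_int M * d"
    by (simp add: algebra_simps)
  also have "\<dots> \<longleftrightarrow> (N - x) * (x + 1) \<le> M"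
    using assms by (simp only: mult_le_cancel_right_pos of_int_le_iff)
  finally show ?thesis
    unfolding feasible_NA_def by linarith
qed

lemma four_mul_product_eq_diff_squares:
  fixes N x :: "'a::comm_ring_1"
  shows "4 * ((N - x) * (x + 1)) = (N + 1)\<^sup>2 - (2 * x - N + 1)\<^sup>2"
  by (simp add: power2_eq_square algebra_simps)

text \<open>No sign condition on a is needed: sqrt is odd and strictly increasing on all reals.
  Hence the next lemma holds even when the discriminant (N + 1)^2 - 4M is negative.\<close>

lemma le_power2_iff_sqrt_le_abs:
  fixes a b :: real
  shows "a \<le> b\<^sup>2 \<longleftrightarrow> sqrt a \<le> \<bar>b\<bar>"
  by (metis real_sqrt_abs real_sqrt_le_iff)

lemma le_abs_diff_iff_floor_ceiling:
  fixes x :: int and c s :: real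
  shows "s \<le> \<bar>of_int x - c\<bar> \<longleftrightarrow> x \<le> \<lfloor>c - s\<rfloor> \<or> \<lceil>c + s\<rceil> \<le> x"
  unfolding le_floor_iff ceiling_le_iff by arith

lemma product_le_iff_outside_roots:
  fixes M N x :: int
  shows "(N - x) * (x + 1) \<le> M \<longleftrightarrow> x \<le> Nin_l M N \<or> Nin_u M N \<le> x"
proof -
  define D where "D = (N + 1)\<^sup>2 - 4 * M"
  define c where "c = real_of_int (N - 1) / 2"
  define s where "s = sqrt (real_of_int D) / 2"
  have "(N - x) * (x + 1) \<le> M \<longleftrightarrow> D \<le> (2 * x - N + 1)\<^sup>2"
    using four_mul_product_eq_diff_squares[of N x] unfolding D_def by linarith
  also have "\<dots> \<longleftrightarrow> sqrt (real_of_int D) \<le> \<bar>real_of_int (2 * x - N + 1)\<bar>"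
    by (metis le_power2_iff_sqrt_le_abs of_int_le_iff of_int_power)
  also have "\<bar>real_of_int (2 * x - N + 1)\<bar> = 2 * \<bar>of_int x - c\<bar>"
    unfolding c_def by (simp add: abs_if field_simps)
  also have "sqrt (real_of_int D) \<le> 2 * \<bar>of_int x - c\<bar> \<longleftrightarrow> s \<le> \<bar>of_int x - c\<bar>"
    unfolding s_def by (simp add: field_simps)
  also have "\<dots> \<longleftrightarrow> x \<le> \<lfloor>c - s\<rfloor> \<or> \<lceil>c + s\<rceil> \<le> x"
    by (rule le_abs_diff_iff_floor_ceiling)
  also have "\<lfloor>c - s\<rfloor> = Nin_l M N"
    unfolding Nin_l_def c_def s_def D_def by (simp only: diff_divide_distrib)
  also have "\<lceil>c + s\<rceil> = Nin_u M N"
    unfolding Nin_u_def c_def s_def D_def by (simp only: add_divide_distrib)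
  finally show ?thesis .
qed

lemma Nin_l_Nin_u_around_centre:
  fixes M N :: int
  assumes "4 * M \<le> (N + 1)\<^sup>2"
  shows "2 * Nin_l M N \<le> N - 1" and "N - 1 \<le> 2 * Nin_u M N"
proof -
  define s where "s = sqrt (real_of_int ((N + 1)\<^sup>2 - 4 * M))"
  have "s \<ge> 0"
    using assms unfolding s_def by (simp only: real_sqrt_ge_zero of_int_0_le_iff diff_ge_0_iff_ge)
  moreover have "real_of_int (Nin_l M N) \<le> (real_of_int (N - 1) - s) / 2"
    unfolding Nin_l_def s_def by (rule of_int_floor_le)
  moreover have "(real_of_int (N - 1) + s) / 2 \<le> real_of_int (Nin_u M N)"
    unfolding Nin_u_def s_def by (rule le_of_int_ceiling)
  ultimately have "real_of_int (2 * Nin_l M N) \<le> real_of_int (N - 1)"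
    and "real_of_int (N - 1) \<le> real_of_int (2 * Nin_u M N)"
    by simp_all
  then show "2 * Nin_l M N \<le> N - 1" and "N - 1 \<le> 2 * Nin_u M N"
    by (simp_all only: of_int_le_iff)
qed

lemma interval_minus_gap_eq_Un:
  fixes a b l u :: int
  assumes "l \<le> b" and "a \<le> u"
  shows "{x. a \<le> x \<and> x \<le> b \<and> (x \<le> l \<or> u \<le> x)} = {a..l} \<union> {u..b}"
  using assms by auto

theorem proposition1:
  fixes M N :: int and d :: real
  assumes "M > 0" and "N > 0" and "d > 0"
  shows "(real_of_int ((N + 1)^2) / 4 \<le> real_of_int M \<longrightarrow> S_NA M N d = {1..N - 2})
       \<and> (real_of_int ((N + 1)^2) / 4 > real_of_int M \<and> Nin_l M N \<ge> 1 \<longrightarrow>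
            S_NA M N d = {1..Nin_l M N} \<union> {Nin_u M N..N - 2})"
proof (intro conjI impI)
  assume "real_of_int ((N + 1)^2) / 4 \<le> real_of_int M"
  then have "(N + 1)\<^sup>2 \<le> 4 * M"
    by linarith
  then have "(N - x) * (x + 1) \<le> M" for x
    using four_mul_product_eq_diff_squares[of N x] zero_le_power2[of "2 * x - N + 1"] by linarith
  then show "S_NA M N d = {1..N - 2}"
    unfolding S_NA_def feasible_NA_iff[OF assms(3)] by auto
next
  assume "real_of_int ((N + 1)^2) / 4 > real_of_int M \<and> Nin_l M N \<ge> 1"
  then have discriminant_nonneg: "4 * M \<le> (N + 1)\<^sup>2" and "1 \<le> Nin_l M N"
    by linarith+
  with Nin_l_Nin_u_around_centre[OF discriminant_nonneg]
  have "Nin_l M N \<le> N - 2" and "1 \<le> Nin_u M N"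
    by linarith+
  moreover have "S_NA M N d = {x. 1 \<le> x \<and> x \<le> N - 2 \<and> (x \<le> Nin_l M N \<or> Nin_u M N \<le> x)}"
    unfolding S_NA_def feasible_NA_iff[OF assms(3)] product_le_iff_outside_roots ..
  ultimately show "S_NA M N d = {1..Nin_l M N} \<union> {Nin_u M N..N - 2}"
    by (simp only: interval_minus_gap_eq_Un)
qed

end
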